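(* Let $n$ and $s$ be nonnegative integers with $s\le n$. Then, as an identity of rational functions in the indeterminates $q$ and $x$, $$\left(\sum_{k=s}^{n}\frac{(q^{-2n};q^2)_k\,(x;q)_k\,q^k}{(q;q)_{k-s}(q;q)_{k+s}}\right)\left(\sum_{k=s}^{n}\frac{(q^{-2n};q^2)_k\,(q/x;q)_k\,q^k}{(q;q)_{k-s}(q;q)_{k+s}}\right)$$ $$=\frac{(-1)^n(q^2;q^2)_n^2\,q^{-n^2}}{(q^2;q^2)_{n-s}(q^2;q^2)_{n+s}}\sum_{k=s}^{n}\frac{(-1)^k(q^2;q^2)_{n+k}\,(x;q)_k\,(q/x;q)_k\,q^{k^2-2nk}}{(q^2;q^2)_{n-k}\,(q;q)_{k-s}\,(q;q)_{k+s}\,(q;q)_{2k}}.$$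
   Context: For an indeterminate $q$ and an integer $n\ge 0$: $(a;q)_0=1$ and $(a;q)_n=(1-a)(1-aq)\cdots(1-aq^{n-1})$. *)

theory Defs
  imports Complex_Main
begin

definition qpoch :: "'a::field \<Rightarrow> 'a \<Rightarrow> nat \<Rightarrow> 'a" where
  "qpoch a q n = (\<Prod>i<n. (1 - a * q ^ i))"

end

theory Submission
  imports Defs "HOL-Computational_Algebra.Polynomial"
begin

text \<open>
  The theorem is a specialization of a product formula for a terminating basic hypergeometric
  series.  For \<open>b\<close> generic with respect to \<open>q\<close> let
    \<open>\<phi> m d y = \<Sum>\<^sub>j (q\<^bsup>-m\<^esup>;q)\<^sub>j (d;q)\<^sub>j (y;q)\<^sub>j q\<^sup>j / ((q;q)\<^sub>j (b;q)\<^sub>j)\<close>.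
  The product formula (\<open>product_formula\<close>) expresses \<open>\<phi> m d y \<cdot> \<phi> m d (b/y)\<close> as
    \<open>d\<^sup>m \<Sum>\<^sub>j c\<^sub>m\<^sub>,\<^sub>j (y;q)\<^sub>j (b/y;q)\<^sub>j (d;q)\<^sub>j (b/d;q)\<^sub>j\<close>,
  \<open>c\<^sub>m\<^sub>,\<^sub>j = (q\<^bsup>-m\<^esup>;q)\<^sub>j (bq\<^sup>m;q)\<^sub>j q\<^sup>j / ((q;q)\<^sub>j (b;q)\<^sub>j (b;q)\<^sub>2\<^sub>j)\<close>.  It is proved in three steps.
  (1) The q-Chu--Vandermonde sum and the Cauchy binomial theorem give the expansion of \<open>\<phi>\<close> in
  powers of \<open>d\<close>, hence the reflection symmetry \<open>y\<^sup>m \<phi> m d (b/y) = d\<^sup>m \<phi> m (b/d) y\<close>; so both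
  sides transform alike under \<open>y \<leftrightarrow> d\<close> and \<open>y \<mapsto> b/y\<close>.
  (2) At \<open>d = q\<^bsup>-n\<^esup>\<close>, by induction on \<open>n\<close>: \<open>z\<^sup>n\<close> times either side is a polynomial in \<open>z = y\<close> of
  degree \<open>\<le> 2n\<close>; the top coefficients agree (q-Chu--Vandermonde again), and the two polynomials
  agree at the \<open>2n\<close> nodes \<open>q\<^bsup>-i\<^esup>\<close>, \<open>b q\<^sup>i\<close> (\<open>i < n\<close>) by the induction hypothesis and the symmetries.
  (3) As polynomials in \<open>d\<close> both sides agree at the infinitely many points \<open>q\<^bsup>-n\<^esup>\<close>.
  The theorem is the case \<open>b = q\<^bsup>2s+1\<^esup>\<close>, \<open>m = n - s\<close>, \<open>d = -q\<^bsup>-m\<^esup>\<close>, \<open>y = x q\<^sup>s\<close>: each sum on the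
  left is a multiple of a \<open>\<phi>\<close>-series, and the right-hand sides agree term by term.
\<close>

section \<open>Elementary facts on q-Pochhammer symbols\<close>

lemma qpoch_0 [simp]: "qpoch a q 0 = 1"
  by (simp add: qpoch_def)

lemma qpoch_Suc: "qpoch a q (Suc n) = qpoch a q n * (1 - a * q ^ n)"
  by (simp add: qpoch_def)

lemma qpoch_add: "qpoch a q (m + n) = qpoch a q m * qpoch (a * q ^ m) q n"
  by (induct n) (simp_all add: qpoch_Suc power_add mult.assoc)

lemma qpoch_Suc_left: "qpoch a q (Suc n) = (1 - a) * qpoch (a * q) q n"
  using qpoch_add[of a q 1 n] by (simp add: qpoch_Suc)

lemma qpoch_nonzero:
  assumes "\<And>i. i < n \<Longrightarrow> a * q ^ i \<noteq> 1"
  shows "qpoch a q n \<noteq> 0"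
  using assms by (simp add: qpoch_def)

text \<open>Pairing \<open>(a;q)\<^sub>n\<close> with \<open>(-a;q)\<^sub>n\<close> gives a product in base \<open>q\<^sup>2\<close>;
  this is how the base-\<open>q\<^sup>2\<close> symbols of the theorem arise.\<close>
lemma qpoch_times_minus: "qpoch a q n * qpoch (- a) q n = qpoch (a\<^sup>2) (q\<^sup>2) n"
  unfolding qpoch_def prod.distrib[symmetric]
  by (rule prod.cong) (simp_all add: algebra_simps power2_eq_square power_mult[symmetric])

lemma prod_minus_geometric:
  fixes y b q :: "'a::field"
  assumes "y \<noteq> 0"
  shows "(\<Prod>i<N. y - b * q ^ i) = y ^ N * qpoch (b / y) q N"
proof -
  have "(\<Prod>i<N. y - b * q ^ i) = (\<Prod>i<N. y * (1 - b / y * q ^ i))"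
    by (rule prod.cong) (use assms in \<open>auto simp: field_simps\<close>)
  then show ?thesis
    by (simp add: prod.distrib qpoch_def)
qed

text \<open>\<open>qsign q k = (-1)\<^sup>k q\<^bsup>k(k-1)/2\<^esup>\<close>, the leading coefficient of \<open>(z;q)\<^sub>k\<close> as a
  polynomial in \<open>z\<close>.\<close>
definition qsign :: "'a::field \<Rightarrow> nat \<Rightarrow> 'a" where
  "qsign q k = (\<Prod>i<k. - (q ^ i))"

lemma qsign_square: "qsign (q\<^sup>2) k = (-1) ^ k * q ^ (k * k - k)"
proof (induct k)
  case (Suc k)
  have "q ^ (Suc k * Suc k - Suc k) = q ^ (k * k - k) * (q\<^sup>2) ^ k"
    by (simp add: power_add[symmetric] power_mult[symmetric] algebra_simps)
  then show ?case
    using Suc by (simp add: qsign_def)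
qed (simp add: qsign_def)

lemma qpoch_inverse_power:
  fixes q :: "'a::field"
  assumes "q \<noteq> 0"
  shows "qpoch (inverse (q ^ (k + N))) q k * qsign q k * q ^ (k * (N + 1)) * qpoch q q N
       = qpoch q q (k + N)"
proof (induct k arbitrary: N)
  case (Suc k)
  have "qpoch (inverse (q ^ (Suc k + N))) q (Suc k) * qsign q (Suc k) * q ^ (Suc k * (N + 1)) * qpoch q q N
      = qpoch (inverse (q ^ (k + Suc N))) q k * qsign q k * q ^ (k * (Suc N + 1)) * qpoch q q (Suc N)"
    using assms by (simp add: qpoch_Suc qsign_def field_simps power_add)
  also have "\<dots> = qpoch q q (Suc k + N)"
    using Suc[of "Suc N"] by simp
  finally show ?case .
qed (simp add: qsign_def)

text \<open>In base \<open>q\<^sup>2\<close> the reversal reads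
  \<open>(q\<^bsup>-2(k+r)\<^esup>;q\<^sup>2)\<^sub>k \<cdot> (-1)\<^sup>k q\<^bsup>k(k+2r+1)\<^esup> \<cdot> (q\<^sup>2;q\<^sup>2)\<^sub>r = (q\<^sup>2;q\<^sup>2)\<^sub>k\<^sub>+\<^sub>r\<close>.\<close>
definition reversal_factor :: "'a::field \<Rightarrow> nat \<Rightarrow> nat \<Rightarrow> 'a" where
  "reversal_factor q k r = (-1) ^ k * q ^ (k * (k + 2 * r + 1))"

lemma qpoch_inverse_power_square:
  fixes q :: "'a::field"
  assumes "q \<noteq> 0"
  shows "qpoch (inverse (q ^ (2 * (k + r)))) (q\<^sup>2) k * reversal_factor q k r * qpoch (q\<^sup>2) (q\<^sup>2) r
       = qpoch (q\<^sup>2) (q\<^sup>2) (k + r)"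
proof -
  have exp: "k * (k + 2 * r + 1) = (k * k - k) + 2 * (k * (r + 1))"
    by (cases k) (simp_all add: algebra_simps)
  have "reversal_factor q k r = qsign (q\<^sup>2) k * (q\<^sup>2) ^ (k * (r + 1))"
    unfolding reversal_factor_def exp qsign_square by (simp only: power_add power_mult mult.assoc)
  moreover have "inverse (q ^ (2 * (k + r))) = inverse ((q\<^sup>2) ^ (k + r))"
    by (simp add: power_mult[symmetric] mult.commute)
  ultimately show ?thesis
    using qpoch_inverse_power[of "q\<^sup>2" k r] assms by (simp add: mult.assoc)
qed

lemma sum_drop_leading_zeros:
  fixes f :: "nat \<Rightarrow> 'a::comm_monoid_add"
  assumes "\<And>j. j < k \<Longrightarrow> f j = 0"
  shows "(\<Sum>j\<le>k + N. f j) = (\<Sum>r\<le>N. f (k + r))"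
proof (induct N)
  case 0
  have "(\<Sum>j\<le>k. f j) = (\<Sum>j<k. f j) + f k"
    by (simp add: lessThan_Suc_atMost[symmetric])
  then show ?case
    using assms by simp
qed simp

lemma sum_atMost_extend:
  fixes g :: "nat \<Rightarrow> 'a::comm_monoid_add"
  assumes "j \<le> m" and "\<And>k. j < k \<Longrightarrow> k \<le> m \<Longrightarrow> g k = 0"
  shows "(\<Sum>k\<le>j. g k) = (\<Sum>k\<le>m. g k)"
  by (rule sum.mono_neutral_left) (use assms in auto)

lemma coeff_mult_at_degree_bound:
  fixes p r :: "'a::idom poly"
  assumes "degree p \<le> a" and "degree r \<le> c"
  shows "coeff (p * r) (a + c) = coeff p a * coeff r c"
proof (cases "degree p = a \<and> degree r = c")
  case True
  then show ?thesis
    using coeff_mult_degree_sum[of p r] by simp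
next
  case False
  then have "degree (p * r) < a + c"
    using assms degree_mult_le[of p r] by auto
  then show ?thesis
    using False assms by (auto simp: coeff_eq_0 le_neq_implies_less)
qed

lemma poly_eqI_infinite:
  fixes p r :: "'a::idom poly"
  assumes "infinite A" and "\<And>x. x \<in> A \<Longrightarrow> poly p x = poly r x"
  shows "p = r"
proof (rule ccontr)
  assume "p \<noteq> r"
  then have "finite {x. poly (p - r) x = 0}"
    by (intro poly_roots_finite) simp
  moreover have "A \<subseteq> {x. poly (p - r) x = 0}"
    using assms(2) by auto
  ultimately show False
    using assms(1) finite_subset by blast
qed

section \<open>A generic base q: the q-Chu--Vandermonde sum and the Cauchy binomial theorem\<close>

text \<open>Throughout, \<open>q\<close> is nonzero and not a root of unity; then \<open>(q;q)\<^sub>n \<noteq> 0\<close> and the powers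
  of \<open>q\<close> are pairwise distinct.\<close>
locale generic_q =
  fixes q :: "'a::field_char_0"
  assumes q_nonzero: "q \<noteq> 0"
    and q_not_root_of_unity: "\<And>j::nat. j \<ge> 1 \<Longrightarrow> q ^ j \<noteq> 1"
begin

lemma qpow_ne_1: "j > 0 \<Longrightarrow> q ^ j \<noteq> 1"
  using q_not_root_of_unity by auto

lemma qpoch_q_nonzero: "qpoch q q n \<noteq> 0"
  by (rule qpoch_nonzero) (use qpow_ne_1[of "Suc _"] in \<open>simp add: mult.commute\<close>)

lemma qpoch_inverse_power_zero: "m < j \<Longrightarrow> qpoch (inverse (q ^ m)) q j = 0"
  using q_nonzero by (auto simp: qpoch_def intro!: bexI[of _ m])

lemma generic_q_square: "generic_q (q\<^sup>2)"
  using q_nonzero q_not_root_of_unity[of "2 * _"] by unfold_locales (auto simp: power_mult[symmetric])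

lemma qpoch_q2_nonzero: "qpoch (q\<^sup>2) (q\<^sup>2) n \<noteq> 0"
  by (rule generic_q.qpoch_q_nonzero[OF generic_q_square])

lemma qpoch_inverse_power_square_eq:
  "qpoch (inverse (q ^ (2 * (k + r)))) (q\<^sup>2) k
     = qpoch (q\<^sup>2) (q\<^sup>2) (k + r) / (reversal_factor q k r * qpoch (q\<^sup>2) (q\<^sup>2) r)"
proof -
  have "reversal_factor q k r \<noteq> 0"
    using q_nonzero by (simp add: reversal_factor_def)
  then show ?thesis
    using qpoch_inverse_power_square[OF q_nonzero, of k r] qpoch_q2_nonzero[of r] by (simp add: field_simps)
qed

lemma qpow_inj: "q ^ i = q ^ j \<Longrightarrow> i = j"
proof (rule ccontr)
  assume eq: "q ^ i = q ^ j" and "i \<noteq> j"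
  have False if "a < b" "q ^ a = q ^ b" for a b :: nat
  proof -
    have "q ^ a * q ^ (b - a) = q ^ b"
      using that(1) by (simp add: power_add[symmetric])
    then have "q ^ (b - a) = 1"
      using that(2) q_nonzero by simp
    then show False
      using qpow_ne_1[of "b - a"] that(1) by simp
  qed
  with eq \<open>i \<noteq> j\<close> show False
    by (metis linorder_neqE_nat)
qed

text \<open>The coefficients \<open>(q\<^bsup>-N\<^esup>;q)\<^sub>l q\<^sup>l / (q;q)\<^sub>l\<close> of the terminating q-Chu--Vandermonde sum.\<close>
definition chu_coeff :: "nat \<Rightarrow> nat \<Rightarrow> 'a" where
  "chu_coeff N l = qpoch (inverse (q ^ N)) q l * q ^ l / qpoch q q l"

lemma chu_coeff_0 [simp]: "chu_coeff N 0 = 1"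
  by (simp add: chu_coeff_def)

lemma chu_coeff_top: "chu_coeff N (Suc N) = 0"
  by (simp add: chu_coeff_def qpoch_inverse_power_zero)

lemma chu_coeff_Suc:
  "chu_coeff (Suc N) (Suc l) = inverse (q ^ Suc l) * chu_coeff N (Suc l) - inverse (q ^ l) * chu_coeff N l"
proof -
  define X where "X = qpoch (inverse (q ^ N)) q l"
  have nz: "qpoch q q l \<noteq> 0" "1 - q ^ Suc l \<noteq> 0"
    using qpoch_q_nonzero qpow_ne_1[of "Suc l"] by auto
  have num_Suc: "qpoch (inverse (q ^ Suc N)) q (Suc l) = (1 - inverse (q ^ Suc N)) * X"
    unfolding qpoch_Suc_left X_def using q_nonzero by (simp add: field_simps)
  have num: "qpoch (inverse (q ^ N)) q (Suc l) = X * (1 - inverse (q ^ N) * q ^ l)"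
    unfolding qpoch_Suc X_def ..
  show ?thesis
    unfolding chu_coeff_def num_Suc num qpoch_Suc[of q q l] X_def[symmetric]
    using nz q_nonzero by (simp add: field_simps)
qed

lemma q_chu_vandermonde:
  "(\<Sum>l\<le>N. chu_coeff N l * qpoch B q l * qpoch (C * q ^ l) q (N - l)) = (\<Prod>i<N. B - C * q ^ i)"
proof (induct N arbitrary: C)
  case (Suc N)
  define T where "T l = qpoch B q l * qpoch (C * q ^ l) q (Suc N - l)" for l
  have step: "inverse (q ^ l) * chu_coeff N l * T l - inverse (q ^ l) * chu_coeff N l * T (Suc l)
      = (B - C) * (chu_coeff N l * qpoch B q l * qpoch ((C * q) * q ^ l) q (N - l))" if "l \<le> N" for l
  proof -
    have T_l: "T l = qpoch B q l * (1 - C * q ^ l) * qpoch ((C * q) * q ^ l) q (N - l)"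
      unfolding T_def using that by (simp add: Suc_diff_le qpoch_Suc_left mult_ac)
    have T_Suc: "T (Suc l) = qpoch B q l * (1 - B * q ^ l) * qpoch ((C * q) * q ^ l) q (N - l)"
      unfolding T_def using that by (simp add: qpoch_Suc mult_ac)
    show ?thesis
      unfolding T_l T_Suc using q_nonzero by (simp add: field_simps)
  qed
  have "(\<Sum>l\<le>Suc N. chu_coeff (Suc N) l * qpoch B q l * qpoch (C * q ^ l) q (Suc N - l))
      = T 0 + (\<Sum>l\<le>N. chu_coeff (Suc N) (Suc l) * T (Suc l))"
    unfolding sum.atMost_Suc_shift by (simp add: T_def mult.assoc)
  also have "\<dots> = (T 0 + (\<Sum>l\<le>N. inverse (q ^ Suc l) * chu_coeff N (Suc l) * T (Suc l)))
      - (\<Sum>l\<le>N. inverse (q ^ l) * chu_coeff N l * T (Suc l))"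
    by (simp add: chu_coeff_Suc algebra_simps sum_subtractf)
  also have "T 0 + (\<Sum>l\<le>N. inverse (q ^ Suc l) * chu_coeff N (Suc l) * T (Suc l))
      = (\<Sum>l\<le>N. inverse (q ^ l) * chu_coeff N l * T l)"
    using sum.atMost_Suc_shift[of "\<lambda>l. inverse (q ^ l) * chu_coeff N l * T l" N]
    by (simp add: chu_coeff_top)
  also have "\<dots> - (\<Sum>l\<le>N. inverse (q ^ l) * chu_coeff N l * T (Suc l))
      = (B - C) * (\<Sum>l\<le>N. chu_coeff N l * qpoch B q l * qpoch ((C * q) * q ^ l) q (N - l))"
    unfolding sum_subtractf[symmetric] sum_distrib_left by (rule sum.cong) (simp_all add: step)
  also have "\<dots> = (\<Prod>i<Suc N. B - C * q ^ i)"
    unfolding Suc prod.lessThan_Suc_shift by (simp add: mult_ac)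
  finally show ?case .
qed simp

lemma q_chu_vandermonde_div:
  assumes "qpoch C q N \<noteq> 0"
  shows "(\<Sum>l\<le>N. chu_coeff N l * qpoch B q l / qpoch C q l) = (\<Prod>i<N. B - C * q ^ i) / qpoch C q N"
proof -
  have "chu_coeff N l * qpoch B q l / qpoch C q l
      = chu_coeff N l * qpoch B q l * qpoch (C * q ^ l) q (N - l) / qpoch C q N" if "l \<le> N" for l
  proof -
    have split: "qpoch C q N = qpoch C q l * qpoch (C * q ^ l) q (N - l)"
      using qpoch_add[of C q l "N - l"] that by simp
    with assms have "qpoch C q l \<noteq> 0" "qpoch (C * q ^ l) q (N - l) \<noteq> 0"
      by auto
    then show ?thesis
      unfolding split by (simp add: field_simps)
  qed
  then have "(\<Sum>l\<le>N. chu_coeff N l * qpoch B q l / qpoch C q l)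
      = (\<Sum>l\<le>N. chu_coeff N l * qpoch B q l * qpoch (C * q ^ l) q (N - l)) / qpoch C q N"
    unfolding sum_divide_distrib by (intro sum.cong) auto
  then show ?thesis
    unfolding q_chu_vandermonde .
qed

text \<open>Coefficients of the Cauchy binomial theorem
  \<open>(d;q)\<^sub>j = \<Sum>\<^sub>k [j choose k]\<^sub>q (-1)\<^sup>k q\<^bsup>k(k-1)/2\<^esup> d\<^sup>k\<close>.\<close>
definition cauchy_coeff :: "nat \<Rightarrow> nat \<Rightarrow> 'a" where
  "cauchy_coeff j k =
     (if k \<le> j then qpoch q q j / (qpoch q q k * qpoch q q (j - k)) * qsign q k else 0)"

lemma cauchy_coeff_0 [simp]: "cauchy_coeff j 0 = 1"
  using qpoch_q_nonzero by (simp add: cauchy_coeff_def qsign_def)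

lemma cauchy_coeff_pascal:
  assumes "k \<le> j"
  shows "cauchy_coeff (Suc j) (Suc k) = cauchy_coeff j (Suc k) - q ^ j * cauchy_coeff j k"
proof (cases "k = j")
  case True
  then show ?thesis
    using qpoch_q_nonzero by (simp add: cauchy_coeff_def qsign_def)
next
  case False
  with assms obtain r where j: "j = Suc (k + r)"
    by (metis le_neq_implies_less less_iff_Suc_add)
  define X where "X = qpoch q q j * qsign q k / (qpoch q q k * qpoch q q r)"
  define a where "a = 1 - q ^ Suc k"
  define c where "c = 1 - q ^ Suc r"
  have nz: "qpoch q q k \<noteq> 0" "qpoch q q r \<noteq> 0" "a \<noteq> 0" "c \<noteq> 0"
    using qpoch_q_nonzero qpow_ne_1[of "Suc k"] qpow_ne_1[of "Suc r"] by (auto simp: a_def c_def)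
  have diffs: "Suc j - Suc k = Suc r" "j - Suc k = r" "j - k = Suc r"
    using j by auto
  have sign: "qsign q (Suc k) = qsign q k * (- (q ^ k))"
    by (simp add: qsign_def)
  have lhs: "cauchy_coeff (Suc j) (Suc k) = X * (1 - q ^ Suc j) * (- (q ^ k)) / (a * c)"
    unfolding cauchy_coeff_def X_def a_def c_def using assms nz
    by (simp add: diffs qpoch_Suc sign field_simps)
  have rhs1: "cauchy_coeff j (Suc k) = X * (- (q ^ k)) / a"
    unfolding cauchy_coeff_def X_def a_def c_def using assms j nz
    by (simp add: diffs qpoch_Suc sign field_simps)
  have rhs2: "cauchy_coeff j k = X / c"
    unfolding cauchy_coeff_def X_def a_def c_def using assms nz
    by (simp add: diffs qpoch_Suc sign field_simps)
  show ?thesis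
    unfolding lhs rhs1 rhs2 using nz
    by (simp add: field_simps) (simp add: a_def c_def j algebra_simps power_add)
qed

lemma cauchy_binomial: "qpoch d q j = (\<Sum>k\<le>j. cauchy_coeff j k * d ^ k)"
proof (induct j)
  case 0
  show ?case
    by simp
next
  case (Suc j)
  have top: "cauchy_coeff j (Suc j) = 0"
    by (simp add: cauchy_coeff_def)
  have shifted: "1 + (\<Sum>k\<le>j. cauchy_coeff j (Suc k) * d ^ Suc k) = (\<Sum>k\<le>j. cauchy_coeff j k * d ^ k)"
    using sum.atMost_Suc_shift[of "\<lambda>k. cauchy_coeff j k * d ^ k" j] by (simp add: top)
  have "(\<Sum>k\<le>Suc j. cauchy_coeff (Suc j) k * d ^ k)
      = 1 + (\<Sum>k\<le>j. cauchy_coeff (Suc j) (Suc k) * d ^ Suc k)"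
    unfolding sum.atMost_Suc_shift by simp
  also have "\<dots> = (1 + (\<Sum>k\<le>j. cauchy_coeff j (Suc k) * d ^ Suc k))
      - q ^ j * d * (\<Sum>k\<le>j. cauchy_coeff j k * d ^ k)"
    by (simp add: cauchy_coeff_pascal algebra_simps sum_subtractf sum_distrib_left)
  finally show ?case
    unfolding shifted Suc[symmetric] qpoch_Suc by (simp add: algebra_simps)
qed

end

section \<open>The terminating series \<open>\<phi>\<close> and its reflection symmetry\<close>

locale generic_qb = generic_q +
  fixes b :: 'a
  assumes b_nonzero: "b \<noteq> 0"
    and b_generic: "\<And>i. b * q ^ i \<noteq> 1"
begin

lemma qpoch_b_shift_nonzero: "qpoch (b * q ^ k) q n \<noteq> 0"
  by (rule qpoch_nonzero) (metis b_generic mult.assoc power_add)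

lemma qpoch_b_nonzero: "qpoch b q n \<noteq> 0"
  using qpoch_b_shift_nonzero[of 0] by simp

definition phi :: "nat \<Rightarrow> 'a \<Rightarrow> 'a \<Rightarrow> 'a" where
  "phi m d y = (\<Sum>j\<le>m. qpoch (inverse (q ^ m)) q j * qpoch d q j * qpoch y q j * q ^ j
                       / (qpoch q q j * qpoch b q j))"

definition phi_weight :: "nat \<Rightarrow> 'a \<Rightarrow> nat \<Rightarrow> 'a" where
  "phi_weight m y j = qpoch (inverse (q ^ m)) q j * qpoch y q j * q ^ j / (qpoch q q j * qpoch b q j)"

lemma phi_by_weight: "phi m d y = (\<Sum>j\<le>m. phi_weight m y j * qpoch d q j)"
  unfolding phi_def phi_weight_def by (rule sum.cong) (simp_all add: algebra_simps)

lemma phi_commute: "phi m d y = phi m y d"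
  unfolding phi_def by (simp add: mult_ac)

text \<open>Shifting the summation index by \<open>k\<close> turns the terms of \<open>\<Sum>\<^sub>j phi_weight \<cdot> cauchy_coeff j k\<close>
  into those of a q-Chu--Vandermonde sum.\<close>
lemma phi_weight_times_cauchy_coeff:
  "phi_weight (k + N) y (k + r) * cauchy_coeff (k + r) k
     = phi_weight (k + N) y k * qsign q k
       * (chu_coeff N r * qpoch (y * q ^ k) q r / qpoch (b * q ^ k) q r)"
proof -
  have nz: "qpoch q q k \<noteq> 0" "qpoch q q r \<noteq> 0" "qpoch q q (k + r) \<noteq> 0" "qpoch b q k \<noteq> 0"
    "qpoch (b * q ^ k) q r \<noteq> 0"
    using qpoch_q_nonzero qpoch_b_nonzero qpoch_b_shift_nonzero by auto
  have "inverse (q ^ (k + N)) * q ^ k = inverse (q ^ N)"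
    using q_nonzero by (simp add: power_add field_simps)
  then have split: "qpoch (inverse (q ^ (k + N))) q (k + r)
      = qpoch (inverse (q ^ (k + N))) q k * qpoch (inverse (q ^ N)) q r"
    unfolding qpoch_add by simp
  show ?thesis
    unfolding phi_weight_def chu_coeff_def cauchy_coeff_def split using nz
    by (simp add: qpoch_add[of y q k r] qpoch_add[of b q k r] power_add field_simps)
qed

text \<open>The coefficient of \<open>d\<^sup>k\<close> in \<open>\<phi> m d y\<close>, evaluated in closed form by q-Chu--Vandermonde.\<close>
lemma phi_coeff:
  assumes "y \<noteq> 0" and "k \<le> m"
  shows "(\<Sum>j\<le>m. phi_weight m y j * cauchy_coeff j k)
       = qpoch q q m * qpoch y q k * qpoch (b / y) q (m - k) * y ^ (m - k)
         / (qpoch q q k * qpoch q q (m - k) * qpoch b q m)"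
proof -
  obtain N where m: "m = k + N"
    using assms(2) le_Suc_ex by blast
  define c where "c = phi_weight m y k * qsign q k"
  have "(\<Sum>j\<le>m. phi_weight m y j * cauchy_coeff j k)
      = (\<Sum>r\<le>N. c * (chu_coeff N r * qpoch (y * q ^ k) q r / qpoch (b * q ^ k) q r))"
    unfolding m c_def phi_weight_times_cauchy_coeff[symmetric]
    by (rule sum_drop_leading_zeros) (simp add: cauchy_coeff_def)
  also have "\<dots> = c * ((\<Prod>i<N. y * q ^ k - b * q ^ k * q ^ i) / qpoch (b * q ^ k) q N)"
    unfolding sum_distrib_left[symmetric] q_chu_vandermonde_div[OF qpoch_b_shift_nonzero] ..
  also have "(\<Prod>i<N. y * q ^ k - b * q ^ k * q ^ i) = q ^ (k * N) * (y ^ N * qpoch (b / y) q N)"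
  proof -
    have "(\<Prod>i<N. y * q ^ k - b * q ^ k * q ^ i) = (\<Prod>i<N. q ^ k * (y - b * q ^ i))"
      by (rule prod.cong) (auto simp: algebra_simps)
    then show ?thesis
      using prod_minus_geometric[OF assms(1)] by (simp add: prod.distrib power_mult)
  qed
  also have "c * (q ^ (k * N) * (y ^ N * qpoch (b / y) q N) / qpoch (b * q ^ k) q N)
      = qpoch q q m * qpoch y q k * qpoch (b / y) q (m - k) * y ^ (m - k)
        / (qpoch q q k * qpoch q q (m - k) * qpoch b q m)"
  proof -
    have rev: "qpoch (inverse (q ^ m)) q k * qsign q k * q ^ k * q ^ (k * N) * qpoch q q N = qpoch q q m"
      using qpoch_inverse_power[OF q_nonzero, of k N] m by (simp add: power_add mult_ac)
    have nz: "qpoch q q k \<noteq> 0" "qpoch q q N \<noteq> 0" "qpoch b q k \<noteq> 0" "qpoch (b * q ^ k) q N \<noteq> 0"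
      using qpoch_q_nonzero qpoch_b_nonzero qpoch_b_shift_nonzero by auto
    show ?thesis
      unfolding c_def phi_weight_def m qpoch_add[of b q k N] rev[unfolded m, symmetric] using nz
      by (simp add: field_simps)
  qed
  finally show ?thesis .
qed

text \<open>Expansion of \<open>\<phi> m d y\<close> as a polynomial in \<open>d\<close>, by the Cauchy binomial theorem.\<close>
lemma phi_expansion:
  assumes "y \<noteq> 0"
  shows "phi m d y = qpoch q q m / qpoch b q m
           * (\<Sum>k\<le>m. qpoch y q k * qpoch (b / y) q (m - k) * d ^ k * y ^ (m - k)
                      / (qpoch q q k * qpoch q q (m - k)))"
proof -
  have "phi m d y = (\<Sum>j\<le>m. \<Sum>k\<le>m. phi_weight m y j * cauchy_coeff j k * d ^ k)"
    unfolding phi_by_weight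
  proof (rule sum.cong[OF refl])
    fix j assume "j \<in> {..m}"
    then have "(\<Sum>k\<le>j. phi_weight m y j * cauchy_coeff j k * d ^ k)
        = (\<Sum>k\<le>m. phi_weight m y j * cauchy_coeff j k * d ^ k)"
      by (intro sum_atMost_extend) (auto simp: cauchy_coeff_def)
    then show "phi_weight m y j * qpoch d q j = (\<Sum>k\<le>m. phi_weight m y j * cauchy_coeff j k * d ^ k)"
      unfolding cauchy_binomial[of d j] by (simp add: sum_distrib_left mult.assoc)
  qed
  also have "\<dots> = (\<Sum>k\<le>m. d ^ k * (\<Sum>j\<le>m. phi_weight m y j * cauchy_coeff j k))"
    by (subst sum.swap) (simp add: sum_distrib_left mult_ac)
  also have "\<dots> = (\<Sum>k\<le>m. d ^ k * (qpoch q q m * qpoch y q k * qpoch (b / y) q (m - k) * y ^ (m - k)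
                      / (qpoch q q k * qpoch q q (m - k) * qpoch b q m)))"
    by (rule sum.cong[OF refl]) (simp only: phi_coeff[OF assms] atMost_iff)
  also have "\<dots> = qpoch q q m / qpoch b q m
           * (\<Sum>k\<le>m. qpoch y q k * qpoch (b / y) q (m - k) * d ^ k * y ^ (m - k)
                      / (qpoch q q k * qpoch q q (m - k)))"
    unfolding sum_distrib_left by (rule sum.cong) (simp_all add: field_simps)
  finally show ?thesis .
qed

text \<open>Reflection symmetry \<open>y\<^sup>m \<phi> m d (b/y) = d\<^sup>m \<phi> m (b/d) y\<close>: reversing the order of summation
  in the expansion above.\<close>
lemma phi_reflection:
  assumes y: "y \<noteq> 0" and d: "d \<noteq> 0"
  shows "y ^ m * phi m d (b / y) = d ^ m * phi m (b / d) y"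
proof -
  define u where "u y' d' k = qpoch y' q k * qpoch (b / y') q (m - k) * d' ^ k * y' ^ (m - k)
                               / (qpoch q q k * qpoch q q (m - k))" for y' d' k
  have by_nonzero: "b / y \<noteq> 0"
    using b_nonzero y by simp
  have expand: "phi m d' y' = qpoch q q m / qpoch b q m * (\<Sum>k\<le>m. u y' d' k)" if "y' \<noteq> 0" for y' d'
    unfolding u_def by (rule phi_expansion[OF that])
  have term_reflect: "y ^ m * u (b / y) d (m - k) = d ^ m * u y (b / d) k" if "k \<le> m" for k
  proof -
    have "y ^ m = y ^ k * y ^ (m - k)" "d ^ m = d ^ k * d ^ (m - k)"
      using that by (simp_all add: power_add[symmetric])
    then show ?thesis
      unfolding u_def using that y d b_nonzero by (simp add: field_simps)
  qed
  have "(\<Sum>k\<le>m. y ^ m * u (b / y) d k) = (\<Sum>k\<le>m. y ^ m * u (b / y) d (m - k))"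
    using sum.atLeastAtMost_rev[of "\<lambda>k. y ^ m * u (b / y) d k" 0 m] by (simp add: atLeast0AtMost)
  also have "\<dots> = (\<Sum>k\<le>m. d ^ m * u y (b / d) k)"
    by (rule sum.cong) (simp_all add: term_reflect)
  finally show ?thesis
    unfolding expand[OF y] expand[OF by_nonzero] by (simp add: sum_distrib_left[symmetric] mult_ac)
qed

section \<open>The product formula for \<open>\<phi>\<close>\<close>

definition rhs_coeff :: "nat \<Rightarrow> nat \<Rightarrow> 'a" where
  "rhs_coeff m j = qpoch (inverse (q ^ m)) q j * qpoch (b * q ^ m) q j * q ^ j
                   / (qpoch q q j * qpoch b q j * qpoch b q (2 * j))"

definition pair_poch :: "'a \<Rightarrow> nat \<Rightarrow> 'a" where
  "pair_poch y j = qpoch y q j * qpoch (b / y) q j"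

definition product_lhs :: "nat \<Rightarrow> 'a \<Rightarrow> 'a \<Rightarrow> 'a" where
  "product_lhs m y d = phi m d y * phi m d (b / y)"

definition product_rhs :: "nat \<Rightarrow> 'a \<Rightarrow> 'a \<Rightarrow> 'a" where
  "product_rhs m y d = d ^ m * (\<Sum>j\<le>m. rhs_coeff m j * pair_poch y j * pair_poch d j)"

text \<open>Both sides are invariant under \<open>y \<mapsto> b/y\<close> and transform alike under exchanging \<open>y\<close> and
  \<open>d\<close>; the latter uses the reflection symmetry of \<open>\<phi>\<close>.\<close>
lemma product_lhs_swap:
  assumes "y \<noteq> 0" and "d \<noteq> 0"
  shows "y ^ m * product_lhs m y d = d ^ m * product_lhs m d y"
proof -
  have "y ^ m * product_lhs m y d = phi m d y * (y ^ m * phi m d (b / y))"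
    unfolding product_lhs_def by (simp add: mult_ac)
  also have "\<dots> = phi m d y * (d ^ m * phi m (b / d) y)"
    using phi_reflection[OF assms] by simp
  also have "\<dots> = d ^ m * product_lhs m d y"
    unfolding product_lhs_def using phi_commute[of m y d] phi_commute[of m "b / d" y]
    by (simp add: mult_ac)
  finally show ?thesis .
qed

lemma product_rhs_swap: "y ^ m * product_rhs m y d = d ^ m * product_rhs m d y"
  unfolding product_rhs_def by (simp add: mult_ac)

lemma product_lhs_reflect: "y \<noteq> 0 \<Longrightarrow> product_lhs m (b / y) d = product_lhs m y d"
  unfolding product_lhs_def using b_nonzero by (simp add: mult_ac)

lemma product_rhs_reflect: "y \<noteq> 0 \<Longrightarrow> product_rhs m (b / y) d = product_rhs m y d"
  unfolding product_rhs_def pair_poch_def using b_nonzero by (simp add: mult_ac)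

lemma product_formula_swap:
  assumes "y \<noteq> 0" and "d \<noteq> 0" and "product_lhs m d y = product_rhs m d y"
  shows "product_lhs m y d = product_rhs m y d"
proof -
  have "y ^ m * product_lhs m y d = y ^ m * product_rhs m y d"
    using product_lhs_swap[OF assms(1,2), of m] product_rhs_swap[of y m d] assms(3) by simp
  then show ?thesis
    using assms(1) by simp
qed

lemma phi_weight_zero: "m < j \<or> n < j \<Longrightarrow> phi_weight m (inverse (q ^ n)) j = 0"
  by (auto simp: phi_weight_def qpoch_inverse_power_zero)

lemma phi_at_inverse_power:
  "phi m (inverse (q ^ n)) y = (\<Sum>j\<le>n. phi_weight m (inverse (q ^ n)) j * qpoch y q j)"
proof -
  have "phi m (inverse (q ^ n)) y = (\<Sum>j\<le>m. phi_weight m (inverse (q ^ n)) j * qpoch y q j)"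
    using phi_commute[of m "inverse (q ^ n)" y] phi_by_weight[of m y "inverse (q ^ n)"] by (rule trans)
  also have "\<dots> = (\<Sum>j\<le>m + n. phi_weight m (inverse (q ^ n)) j * qpoch y q j)"
    by (rule sum_atMost_extend) (auto simp: phi_weight_zero)
  also have "\<dots> = (\<Sum>j\<le>n. phi_weight m (inverse (q ^ n)) j * qpoch y q j)"
    by (rule sum_atMost_extend[symmetric]) (auto simp: phi_weight_zero)
  finally show ?thesis .
qed

lemma product_rhs_at_inverse_power:
  "product_rhs m y (inverse (q ^ n))
     = inverse (q ^ n) ^ m * (\<Sum>j\<le>n. rhs_coeff m j * pair_poch y j * pair_poch (inverse (q ^ n)) j)"
proof -
  let ?t = "\<lambda>j. rhs_coeff m j * pair_poch y j * pair_poch (inverse (q ^ n)) j"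
  have "(\<Sum>j\<le>m. ?t j) = (\<Sum>j\<le>m + n. ?t j)"
    by (rule sum_atMost_extend) (auto simp: rhs_coeff_def qpoch_inverse_power_zero)
  also have "\<dots> = (\<Sum>j\<le>n. ?t j)"
    by (rule sum_atMost_extend[symmetric]) (auto simp: pair_poch_def qpoch_inverse_power_zero)
  finally show ?thesis
    unfolding product_rhs_def by simp
qed

definition poch_poly :: "nat \<Rightarrow> 'a poly" where
  "poch_poly n = (\<Prod>i<n. [:1, - (q ^ i):])"

definition twin_poly :: "nat \<Rightarrow> 'a poly" where
  "twin_poly n = (\<Prod>i<n. [:- (b * q ^ i), 1:])"

lemma poly_poch_poly: "poly (poch_poly n) z = qpoch z q n"
  by (simp add: poch_poly_def qpoch_def poly_prod mult_ac)

lemma degree_poch_poly: "degree (poch_poly n) = n"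
  using q_nonzero by (simp add: poch_poly_def degree_prod_sum_eq)

lemma coeff_poch_poly: "coeff (poch_poly n) n = qsign q n"
proof -
  have "coeff (poch_poly n) n = lead_coeff (poch_poly n)"
    by (simp add: degree_poch_poly)
  also have "\<dots> = (\<Prod>i<n. lead_coeff [:1, - (q ^ i):])"
    unfolding poch_poly_def lead_coeff_prod ..
  finally show ?thesis
    using q_nonzero by (simp add: qsign_def)
qed

lemma degree_twin_poly: "degree (twin_poly n) = n"
  by (simp add: twin_poly_def degree_prod_sum_eq)

lemma coeff_twin_poly: "coeff (twin_poly n) n = 1"
proof -
  have "coeff (twin_poly n) n = lead_coeff (twin_poly n)"
    by (simp add: degree_twin_poly)
  also have "\<dots> = (\<Prod>i<n. lead_coeff [:- (b * q ^ i), 1:])"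
    unfolding twin_poly_def lead_coeff_prod ..
  finally show ?thesis
    by simp
qed

definition padded_twin_poly :: "nat \<Rightarrow> nat \<Rightarrow> 'a poly" where
  "padded_twin_poly n l = monom 1 (n - l) * twin_poly l"

definition pair_poly :: "nat \<Rightarrow> nat \<Rightarrow> 'a poly" where
  "pair_poly n j = poch_poly j * padded_twin_poly n j"

lemma poly_padded_twin_poly:
  assumes "z \<noteq> 0" and "l \<le> n"
  shows "poly (padded_twin_poly n l) z = z ^ n * qpoch (b / z) q l"
proof -
  have "z ^ (n - l) * z ^ l = z ^ n"
    using assms(2) by (simp add: power_add[symmetric])
  then show ?thesis
    using prod_minus_geometric[OF assms(1), of b q l]
    by (simp add: padded_twin_poly_def twin_poly_def poly_prod poly_monom mult_ac)
qed

lemma poly_pair_poly: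
  assumes "z \<noteq> 0" and "j \<le> n"
  shows "poly (pair_poly n j) z = z ^ n * pair_poch z j"
  unfolding pair_poly_def poly_mult poly_padded_twin_poly[OF assms] poly_poch_poly pair_poch_def
  by (simp add: mult_ac)

lemma padded_twin_poly_top:
  assumes "l \<le> n"
  shows "degree (padded_twin_poly n l) \<le> n" and "coeff (padded_twin_poly n l) n = 1"
proof -
  show "degree (padded_twin_poly n l) \<le> n"
    using degree_mult_le[of "monom (1::'a) (n - l)" "twin_poly l"] degree_monom_le[of "1::'a" "n - l"]
      assms by (simp add: padded_twin_poly_def degree_twin_poly)
  show "coeff (padded_twin_poly n l) n = 1"
    using assms by (simp add: padded_twin_poly_def coeff_monom_mult coeff_twin_poly)
qed

lemma pair_poly_top:
  assumes "j \<le> n"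
  shows "degree (pair_poly n j) \<le> n + j" and "coeff (pair_poly n j) (n + j) = qsign q j"
proof -
  show "degree (pair_poly n j) \<le> n + j"
    using degree_mult_le[of "poch_poly j" "padded_twin_poly n j"] padded_twin_poly_top(1)[OF assms]
    by (simp add: pair_poly_def degree_poch_poly)
  show "coeff (pair_poly n j) (n + j) = qsign q j"
    using coeff_mult_at_degree_bound[of "poch_poly j" j "padded_twin_poly n j" n] padded_twin_poly_top[OF assms]
    by (simp add: pair_poly_def degree_poch_poly coeff_poch_poly add.commute)
qed

text \<open>At \<open>d = q\<^bsup>-n\<^esup>\<close>, \<open>z\<^sup>n\<close> times either side of the product formula is a polynomial in \<open>z\<close>
  of degree at most \<open>2n\<close>: \<open>lhs_poly\<close> is the product of \<open>\<phi>(z)\<close> and \<open>z\<^sup>n \<phi>(b/z)\<close>.\<close>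
definition grid_poly :: "nat \<Rightarrow> nat \<Rightarrow> 'a poly" where
  "grid_poly m n = (\<Sum>j\<le>n. smult (phi_weight m (inverse (q ^ n)) j) (poch_poly j))"

definition grid_poly_reflected :: "nat \<Rightarrow> nat \<Rightarrow> 'a poly" where
  "grid_poly_reflected m n =
     (\<Sum>l\<le>n. smult (phi_weight m (inverse (q ^ n)) l) (padded_twin_poly n l))"

definition lhs_poly :: "nat \<Rightarrow> nat \<Rightarrow> 'a poly" where
  "lhs_poly m n = grid_poly m n * grid_poly_reflected m n"

definition rhs_poly :: "nat \<Rightarrow> nat \<Rightarrow> 'a poly" where
  "rhs_poly m n = smult (inverse (q ^ n) ^ m)
     (\<Sum>j\<le>n. smult (rhs_coeff m j * pair_poch (inverse (q ^ n)) j) (pair_poly n j))"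

lemma poly_lhs_poly:
  assumes "z \<noteq> 0"
  shows "poly (lhs_poly m n) z = z ^ n * product_lhs m z (inverse (q ^ n))"
proof -
  have "poly (grid_poly_reflected m n) z
      = (\<Sum>l\<le>n. z ^ n * (phi_weight m (inverse (q ^ n)) l * qpoch (b / z) q l))"
    unfolding grid_poly_reflected_def poly_sum
    by (rule sum.cong) (simp_all add: poly_padded_twin_poly[OF assms])
  then show ?thesis
    unfolding lhs_poly_def product_lhs_def poly_mult phi_at_inverse_power
    by (simp add: grid_poly_def poly_sum poly_poch_poly sum_distrib_left mult_ac)
qed

lemma poly_rhs_poly:
  assumes "z \<noteq> 0"
  shows "poly (rhs_poly m n) z = z ^ n * product_rhs m z (inverse (q ^ n))"
proof -
  have "poly (\<Sum>j\<le>n. smult (rhs_coeff m j * pair_poch (inverse (q ^ n)) j) (pair_poly n j)) z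
      = (\<Sum>j\<le>n. z ^ n * (rhs_coeff m j * pair_poch z j * pair_poch (inverse (q ^ n)) j))"
    unfolding poly_sum
    by (rule sum.cong) (simp_all add: poly_pair_poly[OF assms])
  then show ?thesis
    unfolding rhs_poly_def product_rhs_at_inverse_power by (simp add: sum_distrib_left mult_ac)
qed

lemma lhs_poly_top:
  shows "degree (lhs_poly m n) \<le> n + n"
    and "coeff (lhs_poly m n) (n + n)
           = phi_weight m (inverse (q ^ n)) n * qsign q n * (\<Sum>l\<le>n. phi_weight m (inverse (q ^ n)) l)"
proof -
  have deg1: "degree (grid_poly m n) \<le> n"
    unfolding grid_poly_def
    by (rule degree_sum_le) (auto intro: order.trans[OF degree_smult_le] simp: degree_poch_poly)
  have deg2: "degree (grid_poly_reflected m n) \<le> n"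
    unfolding grid_poly_reflected_def
    by (rule degree_sum_le) (auto intro: order.trans[OF degree_smult_le] padded_twin_poly_top)
  show "degree (lhs_poly m n) \<le> n + n"
    unfolding lhs_poly_def using degree_mult_le deg1 deg2 by (meson add_mono order_trans)
  have "coeff (grid_poly m n) n = phi_weight m (inverse (q ^ n)) n * qsign q n"
    unfolding grid_poly_def coeff_sum
    by (simp add: lessThan_Suc_atMost[symmetric] coeff_eq_0 degree_poch_poly coeff_poch_poly)
  moreover have "coeff (grid_poly_reflected m n) n = (\<Sum>l\<le>n. phi_weight m (inverse (q ^ n)) l)"
    unfolding grid_poly_reflected_def coeff_sum by (rule sum.cong) (simp_all add: padded_twin_poly_top)
  ultimately show "coeff (lhs_poly m n) (n + n)
           = phi_weight m (inverse (q ^ n)) n * qsign q n * (\<Sum>l\<le>n. phi_weight m (inverse (q ^ n)) l)"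
    unfolding lhs_poly_def coeff_mult_at_degree_bound[OF deg1 deg2] by simp
qed

lemma rhs_poly_top:
  shows "degree (rhs_poly m n) \<le> n + n"
    and "coeff (rhs_poly m n) (n + n)
           = inverse (q ^ n) ^ m * rhs_coeff m n * pair_poch (inverse (q ^ n)) n * qsign q n"
proof -
  show "degree (rhs_poly m n) \<le> n + n"
    unfolding rhs_poly_def
    by (intro order.trans[OF degree_smult_le] degree_sum_le order.trans[OF degree_smult_le])
       (auto intro: order.trans[OF pair_poly_top(1)])
  define c where "c j = rhs_coeff m j * pair_poch (inverse (q ^ n)) j" for j
  have low: "coeff (pair_poly n j) (n + n) = 0" if "j < n" for j
    using pair_poly_top(1)[of j n] that by (simp add: coeff_eq_0)
  have top: "coeff (pair_poly n n) (n + n) = qsign q n"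
    by (rule pair_poly_top(2)) simp
  have "coeff (rhs_poly m n) (n + n) = inverse (q ^ n) ^ m * (\<Sum>j\<le>n. c j * coeff (pair_poly n j) (n + n))"
    unfolding rhs_poly_def c_def coeff_smult coeff_sum ..
  also have "(\<Sum>j\<le>n. c j * coeff (pair_poly n j) (n + n)) = c n * qsign q n"
    unfolding lessThan_Suc_atMost[symmetric] sum.lessThan_Suc by (simp add: low top)
  finally show "coeff (rhs_poly m n) (n + n)
           = inverse (q ^ n) ^ m * rhs_coeff m n * pair_poch (inverse (q ^ n)) n * qsign q n"
    by (simp add: c_def mult_ac)
qed

text \<open>The top coefficients agree: this is the q-Chu--Vandermonde evaluation of \<open>\<Sum>\<^sub>l phi_weight\<close>.\<close>
lemma phi_weight_sum_at_inverse_power: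
  "(\<Sum>l\<le>n. phi_weight m (inverse (q ^ n)) l) = inverse (q ^ n) ^ m * qpoch (b * q ^ m) q n / qpoch b q n"
proof -
  have "(\<Sum>l\<le>n. phi_weight m (inverse (q ^ n)) l)
      = (\<Sum>l\<le>n. chu_coeff n l * qpoch (inverse (q ^ m)) q l / qpoch b q l)"
    unfolding phi_weight_def chu_coeff_def
    by (rule sum.cong) (use qpoch_q_nonzero qpoch_b_nonzero in \<open>simp_all add: field_simps\<close>)
  also have "\<dots> = (\<Prod>i<n. inverse (q ^ m) - b * q ^ i) / qpoch b q n"
    by (rule q_chu_vandermonde_div[OF qpoch_b_nonzero])
  also have "(\<Prod>i<n. inverse (q ^ m) - b * q ^ i) = inverse (q ^ n) ^ m * qpoch (b * q ^ m) q n"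
    using prod_minus_geometric[where y = "inverse (q ^ m)" and b = b and N = n] q_nonzero
    by (simp add: power_inverse[symmetric] power_mult[symmetric] mult.commute divide_inverse)
  finally show ?thesis .
qed

lemma top_coeffs_agree:
  "phi_weight m (inverse (q ^ n)) n * qsign q n * (\<Sum>l\<le>n. phi_weight m (inverse (q ^ n)) l)
     = inverse (q ^ n) ^ m * rhs_coeff m n * pair_poch (inverse (q ^ n)) n * qsign q n"
proof -
  have "b / inverse (q ^ n) = b * q ^ n"
    by (simp add: divide_inverse)
  moreover have "qpoch b q (2 * n) = qpoch b q n * qpoch (b * q ^ n) q n"
    using qpoch_add[of b q n n] by (simp add: mult_2)
  moreover have "qpoch q q n \<noteq> 0" "qpoch b q n \<noteq> 0" "qpoch (b * q ^ n) q n \<noteq> 0"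
    using qpoch_q_nonzero qpoch_b_nonzero qpoch_b_shift_nonzero by auto
  ultimately show ?thesis
    unfolding phi_weight_sum_at_inverse_power unfolding phi_weight_def rhs_coeff_def pair_poch_def
    using q_nonzero by (simp add: field_simps)
qed

definition nodes :: "nat \<Rightarrow> 'a set" where
  "nodes n = (\<lambda>i. inverse (q ^ i)) ` {..<n} \<union> (\<lambda>i. b * q ^ i) ` {..<n}"

lemma card_nodes: "card (nodes n) = n + n"
proof -
  have "inj_on (\<lambda>i. inverse (q ^ i)) {..<n}" "inj_on (\<lambda>i. b * q ^ i) {..<n}"
    by (auto intro!: inj_onI simp: qpow_inj b_nonzero)
  moreover have "inverse (q ^ i) \<noteq> b * q ^ j" for i j
  proof
    assume "inverse (q ^ i) = b * q ^ j"
    then have "b * q ^ (j + i) = 1"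
      using q_nonzero by (simp add: power_add field_simps)
    with b_generic show False
      by blast
  qed
  ultimately show ?thesis
    unfolding nodes_def by (subst card_Un_disjoint) (auto simp: card_image)
qed

text \<open>The product formula at \<open>d = q\<^bsup>-n\<^esup>\<close>, by induction on \<open>n\<close>: by the induction hypothesis and
  the swap symmetry it holds at the nodes \<open>y = q\<^bsup>-i\<^esup>\<close>, by reflection also at \<open>y = b q\<^sup>i\<close>; two
  polynomials of degree \<open>\<le> 2n\<close> with equal top coefficients agreeing at \<open>2n\<close> points coincide.\<close>
lemma product_formula_grid:
  assumes "y \<noteq> 0"
  shows "product_lhs m y (inverse (q ^ n)) = product_rhs m y (inverse (q ^ n))"
  using assms
proof (induct n arbitrary: y rule: less_induct)
  case (less n)
  have at_inverse_powers: "product_lhs m (inverse (q ^ i)) (inverse (q ^ n))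
      = product_rhs m (inverse (q ^ i)) (inverse (q ^ n))" if "i < n" for i
    by (rule product_formula_swap) (use q_nonzero less.hyps[OF that] in auto)
  have agree: "poly (lhs_poly m n) z = poly (rhs_poly m n) z" if "z \<in> nodes n" for z
  proof -
    from that consider i where "i < n" "z = inverse (q ^ i)" | i where "i < n" "z = b / inverse (q ^ i)"
      unfolding nodes_def by (auto simp: divide_inverse)
    then have "z \<noteq> 0 \<and> product_lhs m z (inverse (q ^ n)) = product_rhs m z (inverse (q ^ n))"
      by cases (use q_nonzero b_nonzero at_inverse_powers product_lhs_reflect product_rhs_reflect in auto)
    then show ?thesis
      by (simp add: poly_lhs_poly poly_rhs_poly)
  qed
  have "lhs_poly m n = rhs_poly m n"
    by (rule poly_eqI_degree_lead_coeff[of _ "n + n" _ "nodes n"])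
       (use lhs_poly_top rhs_poly_top top_coeffs_agree card_nodes agree in simp_all)
  then have "y ^ n * product_lhs m y (inverse (q ^ n)) = y ^ n * product_rhs m y (inverse (q ^ n))"
    using poly_lhs_poly[OF less.prems, of m n] poly_rhs_poly[OF less.prems, of m n] by argo
  then show ?case
    using less.prems by simp
qed

text \<open>Both sides are polynomials in \<open>d\<close> (after clearing \<open>d \<noteq> 0\<close>) which agree at the infinitely
  many points \<open>q\<^bsup>-n\<^esup>\<close>; hence they agree everywhere.\<close>
theorem product_formula:
  assumes "y \<noteq> 0" and "d \<noteq> 0"
  shows "product_lhs m y d = product_rhs m y d"
proof -
  define phi_poly where "phi_poly y' = (\<Sum>j\<le>m. smult (phi_weight m y' j) (poch_poly j))" for y'
  define rhs_poly_d where "rhs_poly_d = (\<Sum>j\<le>m. smult (rhs_coeff m j * pair_poch y j) (pair_poly m j))"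
  have lhs_eval: "poly (phi_poly y * phi_poly (b / y)) z = product_lhs m y z" for z
    unfolding phi_poly_def product_lhs_def phi_by_weight
    by (simp add: poly_sum poly_poch_poly mult_ac)
  have rhs_eval: "poly rhs_poly_d z = product_rhs m y z" if "z \<noteq> 0" for z
  proof -
    have "poly rhs_poly_d z = (\<Sum>j\<le>m. rhs_coeff m j * pair_poch y j * (z ^ m * pair_poch z j))"
      unfolding rhs_poly_d_def poly_sum
      by (rule sum.cong) (simp_all add: poly_pair_poly[OF that])
    then show ?thesis
      unfolding product_rhs_def by (simp add: sum_distrib_left mult_ac)
  qed
  have "inj (\<lambda>n. inverse (q ^ n))"
    by (rule injI) (use q_nonzero qpow_inj in auto)
  then have "phi_poly y * phi_poly (b / y) = rhs_poly_d"
    by (rule poly_eqI_infinite[OF range_inj_infinite])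
       (use q_nonzero lhs_eval rhs_eval product_formula_grid[OF assms(1)] in auto)
  then show ?thesis
    using lhs_eval rhs_eval[OF assms(2)] by metis
qed

end

section \<open>Specialization: proof of the theorem\<close>

text \<open>The bookkeeping of signs and powers of \<open>q\<close> in the final comparison, with
  \<open>n = s + j + r\<close> and \<open>m = j + r\<close>.\<close>
lemma sign_monomial_identity:
  fixes q :: "'a::field"
  assumes "q \<noteq> 0"
  shows "(-1) ^ (s + j + r) * inverse (q ^ ((s + j + r)\<^sup>2)) * (-1) ^ (s + j)
           * q powi (int ((s + j)\<^sup>2) - 2 * int (s + j + r) * int (s + j))
           * (reversal_factor q s (j + r))\<^sup>2 * reversal_factor q j r
       = q ^ (2 * s) * (- inverse (q ^ (j + r))) ^ (j + r) * q ^ j"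
proof -
  define A where "A = (s + j)\<^sup>2 + 2 * (s * (s + 2 * (j + r) + 1)) + j * (j + 2 * r + 1)"
  define B where "B = 2 * (s + j + r) * (s + j) + (s + j + r)\<^sup>2"
  have exponents: "A + (j + r) * (j + r) = (2 * s + j) + B"
    unfolding A_def B_def by (simp add: algebra_simps power2_eq_square)
  have "q powi (int ((s + j)\<^sup>2) - 2 * int (s + j + r) * int (s + j))
      = q ^ ((s + j)\<^sup>2) / q ^ (2 * (s + j + r) * (s + j))"
  proof -
    have "int ((s + j)\<^sup>2) - 2 * int (s + j + r) * int (s + j) = int ((s + j)\<^sup>2) - int (2 * (s + j + r) * (s + j))"
      by simp
    then show ?thesis
      using power_int_diff[of q "int ((s + j)\<^sup>2)" "int (2 * (s + j + r) * (s + j))"] assms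
      unfolding power_int_of_nat by simp
  qed
  then have "inverse (q ^ ((s + j + r)\<^sup>2)) * q powi (int ((s + j)\<^sup>2) - 2 * int (s + j + r) * int (s + j))
           * (q ^ (s * (s + 2 * (j + r) + 1)))\<^sup>2 * q ^ (j * (j + 2 * r + 1))
      = q ^ A / q ^ B"
    unfolding A_def B_def using assms by (simp add: power_add power_mult[symmetric] field_simps)
  also have "\<dots> = q ^ (2 * s + j) / q ^ ((j + r) * (j + r))"
    using assms exponents by (simp add: field_simps power_add[symmetric])
  finally have powers: "inverse (q ^ ((s + j + r)\<^sup>2)) * q powi (int ((s + j)\<^sup>2) - 2 * int (s + j + r) * int (s + j))
           * (q ^ (s * (s + 2 * (j + r) + 1)))\<^sup>2 * q ^ (j * (j + 2 * r + 1))
      = q ^ (2 * s) * inverse (q ^ ((j + r) * (j + r))) * q ^ j"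
    by (simp add: power_add divide_inverse mult_ac)
  have sign: "(-1::'a) ^ (s + j + r) * (-1) ^ (s + j) * ((-1) ^ s)\<^sup>2 * (-1) ^ j = (-1) ^ (j + r)"
    by (simp add: minus_one_power_iff)
  have "(- inverse (q ^ (j + r))) ^ (j + r) = (-1) ^ (j + r) * inverse (q ^ ((j + r) * (j + r)))"
    by (simp add: power_minus' power_mult power_inverse)
  then show ?thesis
    unfolding reversal_factor_def
    using arg_cong2[where f = "(*)", OF sign powers] by (simp add: power_mult_distrib mult_ac)
qed

text \<open>The setting of the theorem: the product formula is used for \<open>b = q\<^bsup>2s+1\<^esup>\<close>, \<open>m = n - s\<close>,
  \<open>d = -q\<^bsup>-m\<^esup>\<close> and \<open>y = x q\<^sup>s\<close>.\<close>
locale theorem_setting = generic_q +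
  fixes n s :: nat
  assumes s_le_n: "s \<le> n"
begin

sublocale generic_qb q "q ^ (2 * s + 1)"
  using q_nonzero q_not_root_of_unity[of "2 * s + 1 + _"]
  by unfold_locales (auto simp: power_add mult.assoc)

definition special_d :: 'a where
  "special_d = - inverse (q ^ (n - s))"

text \<open>The factor by which each sum on the left of the theorem differs from a \<open>\<phi>\<close>-series.\<close>
definition lhs_prefactor :: "'a \<Rightarrow> 'a" where
  "lhs_prefactor z = qpoch (inverse (q ^ (2 * n))) (q\<^sup>2) s * qpoch z q s * q ^ s / qpoch q q (2 * s)"

lemma sum_from_s: "(\<Sum>k=s..n. f k) = (\<Sum>j\<le>n - s. f (s + j))"
  using sum.atLeastAtMost_shift_0[of s n f, OF s_le_n] by (simp add: atLeast0AtMost comp_def)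

text \<open>Each sum on the left of the theorem is a \<open>\<phi>\<close>-series: splitting \<open>(q\<^bsup>-2n\<^esup>;q\<^sup>2)\<^sub>s\<^sub>+\<^sub>j\<close> at \<open>s\<close> leaves
  \<open>(q\<^bsup>-2m\<^esup>;q\<^sup>2)\<^sub>j = (q\<^bsup>-m\<^esup>;q)\<^sub>j (d;q)\<^sub>j\<close>.\<close>
lemma lhs_sum_as_phi:
  "(\<Sum>k=s..n. qpoch (inverse (q ^ (2 * n))) (q\<^sup>2) k * qpoch z q k * q ^ k
               / (qpoch q q (k - s) * qpoch q q (k + s)))
   = lhs_prefactor z * phi (n - s) special_d (z * q ^ s)"
proof -
  define m where "m = n - s"
  have n: "n = s + m"
    using s_le_n by (simp add: m_def)
  have "inverse (q ^ (2 * n)) * (q\<^sup>2) ^ s = (inverse (q ^ m))\<^sup>2"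
    unfolding n using q_nonzero by (simp add: power_add power_mult[symmetric] field_simps)
  then have head: "qpoch (inverse (q ^ (2 * n))) (q\<^sup>2) (s + j)
      = qpoch (inverse (q ^ (2 * n))) (q\<^sup>2) s * (qpoch (inverse (q ^ m)) q j * qpoch special_d q j)" for j
    unfolding qpoch_add special_d_def m_def[symmetric] qpoch_times_minus by simp
  have denom: "qpoch q q (s + j + s) = qpoch q q (2 * s) * qpoch (q ^ (2 * s + 1)) q j" for j
    using qpoch_add[of q q "2 * s" j] by (simp add: mult_2 add_ac)
  have "qpoch (inverse (q ^ (2 * n))) (q\<^sup>2) (s + j) * qpoch z q (s + j) * q ^ (s + j)
          / (qpoch q q (s + j - s) * qpoch q q (s + j + s))
      = lhs_prefactor z * (qpoch (inverse (q ^ m)) q j * qpoch special_d q j * qpoch (z * q ^ s) q j * q ^ j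
          / (qpoch q q j * qpoch (q ^ (2 * s + 1)) q j))" for j
    unfolding head denom qpoch_add[of z q s j] lhs_prefactor_def
    using qpoch_q_nonzero[of j] qpoch_q_nonzero[of "2 * s"] qpoch_b_nonzero[of j]
    by (simp add: field_simps power_add)
  then show ?thesis
    unfolding sum_from_s phi_def sum_distrib_left m_def by simp
qed

lemma reflected_point:
  assumes "x \<noteq> 0"
  shows "q ^ (2 * s + 1) / (x * q ^ s) = q / x * q ^ s"
  using assms q_nonzero by (simp add: field_simps power_add power_mult power2_eq_square)

lemma product_formula_specialized:
  assumes "x \<noteq> 0"
  shows "lhs_prefactor x * phi (n - s) special_d (x * q ^ s)
           * (lhs_prefactor (q / x) * phi (n - s) special_d (q / x * q ^ s))
       = (\<Sum>j\<le>n - s. lhs_prefactor x * lhs_prefactor (q / x)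
           * (special_d ^ (n - s) * (rhs_coeff (n - s) j * pair_poch (x * q ^ s) j * pair_poch special_d j)))"
proof -
  have "x * q ^ s \<noteq> 0" and "special_d \<noteq> 0"
    using assms q_nonzero by (auto simp: special_d_def)
  then have "lhs_prefactor x * phi (n - s) special_d (x * q ^ s)
          * (lhs_prefactor (q / x) * phi (n - s) special_d (q / x * q ^ s))
      = lhs_prefactor x * lhs_prefactor (q / x) * product_rhs (n - s) (x * q ^ s) special_d"
    using product_formula[of "x * q ^ s" special_d "n - s"]
    unfolding product_lhs_def reflected_point[OF assms] by (simp add: mult_ac)
  then show ?thesis
    unfolding product_rhs_def sum_distrib_left .
qed

lemma rhs_coeff_special_d:
  "rhs_coeff (n - s) j * pair_poch special_d j
     = qpoch (inverse (q ^ (2 * (n - s)))) (q\<^sup>2) j * qpoch (q\<^sup>2 * (q\<^sup>2) ^ (n + s)) (q\<^sup>2) j * q ^ j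
       / (qpoch q q j * qpoch (q ^ (2 * s + 1)) q j * qpoch (q ^ (2 * s + 1)) q (2 * j))"
proof -
  define c where "c = inverse (q ^ (n - s))"
  define e where "e = q ^ (2 * s + 1) * q ^ (n - s)"
  have "c\<^sup>2 = inverse (q ^ (2 * (n - s)))"
    by (simp add: c_def power_inverse power_mult[symmetric] mult.commute)
  then have pair_c: "qpoch c q j * qpoch special_d q j = qpoch (inverse (q ^ (2 * (n - s)))) (q\<^sup>2) j"
    unfolding special_d_def c_def[symmetric] qpoch_times_minus by simp
  have "e\<^sup>2 = q\<^sup>2 * (q\<^sup>2) ^ (n + s)"
    using s_le_n unfolding e_def
    by (simp add: power_add[symmetric] power_mult[symmetric] algebra_simps)
  moreover have "q ^ (2 * s + 1) / special_d = - e"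
    using q_nonzero by (simp add: special_d_def e_def field_simps)
  ultimately have pair_e: "qpoch e q j * qpoch (q ^ (2 * s + 1) / special_d) q j
      = qpoch (q\<^sup>2 * (q\<^sup>2) ^ (n + s)) (q\<^sup>2) j"
    using qpoch_times_minus[of e q j] by simp
  have "rhs_coeff (n - s) j * pair_poch special_d j
      = (qpoch c q j * qpoch special_d q j) * (qpoch e q j * qpoch (q ^ (2 * s + 1) / special_d) q j) * q ^ j
        / (qpoch q q j * qpoch (q ^ (2 * s + 1)) q j * qpoch (q ^ (2 * s + 1)) q (2 * j))"
    unfolding rhs_coeff_def pair_poch_def c_def e_def by (simp add: field_simps)
  then show ?thesis
    unfolding pair_c pair_e .
qed

lemma term_identity:
  assumes "x \<noteq> 0" and "j \<le> n - s"
  shows "lhs_prefactor x * lhs_prefactor (q / x)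
           * (special_d ^ (n - s) * (rhs_coeff (n - s) j * pair_poch (x * q ^ s) j * pair_poch special_d j))
       = (-1) ^ n * (qpoch (q\<^sup>2) (q\<^sup>2) n)\<^sup>2 * inverse (q ^ (n\<^sup>2))
           / (qpoch (q\<^sup>2) (q\<^sup>2) (n - s) * qpoch (q\<^sup>2) (q\<^sup>2) (n + s))
         * ((-1) ^ (s + j) * qpoch (q\<^sup>2) (q\<^sup>2) (n + (s + j)) * qpoch x q (s + j) * qpoch (q / x) q (s + j)
              * q powi (int ((s + j)\<^sup>2) - 2 * int n * int (s + j))
            / (qpoch (q\<^sup>2) (q\<^sup>2) (n - (s + j)) * qpoch q q (s + j - s) * qpoch q q (s + j + s)
               * qpoch q q (2 * (s + j))))"
proof -
  obtain r where n: "n = s + j + r"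
    using assms(2) s_le_n by (metis add.assoc le_add_diff_inverse)
  define Q where "Q k = qpoch (q\<^sup>2) (q\<^sup>2) k" for k
  have indices: "n - s = j + r" "n - (s + j) = r" "s + j - s = j" "s + j + s = 2 * s + j"
    "2 * (s + j) = 2 * s + 2 * j" "n + (s + j) = (n + s) + j" "2 * n = 2 * (s + (j + r))"
    using n by auto
  have rev_nonzero: "reversal_factor q k l \<noteq> 0" for k l
    using q_nonzero by (simp add: reversal_factor_def)
  have monomial: "q powi (int ((s + j)\<^sup>2) - 2 * int n * int (s + j))
      = q ^ s * q ^ s * special_d ^ (n - s) * q ^ j
        / ((-1) ^ n * inverse (q ^ (n\<^sup>2)) * (-1) ^ (s + j) * (reversal_factor q s (j + r))\<^sup>2
           * reversal_factor q j r)"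
    using sign_monomial_identity[OF q_nonzero, of s j r] rev_nonzero q_nonzero
    unfolding special_d_def indices(1) unfolding n mult_2 power_add by (simp add: field_simps)
  have nonzero: "qpoch q q j \<noteq> 0" "qpoch q q (2 * s) \<noteq> 0" "qpoch (q ^ (2 * s + 1)) q j \<noteq> 0"
    "qpoch (q ^ (2 * s + 1)) q (2 * j) \<noteq> 0"
    "Q k \<noteq> 0" for k
    using qpoch_q_nonzero qpoch_b_nonzero qpoch_q2_nonzero by (auto simp: Q_def)
  have reorder: "rhs_coeff (n - s) j * pair_poch (x * q ^ s) j * pair_poch special_d j
      = rhs_coeff (n - s) j * pair_poch special_d j * pair_poch (x * q ^ s) j"
    by (simp add: mult_ac)
  show ?thesis
    unfolding lhs_prefactor_def reorder rhs_coeff_special_d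
    unfolding pair_poch_def reflected_point[OF assms(1)] qpoch_add[of x q s j] qpoch_add[of "q / x" q s j]
      indices qpoch_add[of q q "2 * s"] qpoch_add[of "q\<^sup>2" "q\<^sup>2" "n + s" j]
      qpoch_inverse_power_square_eq monomial
    unfolding Q_def[symmetric]
    using nonzero rev_nonzero q_nonzero by (simp add: field_simps power2_eq_square n)
qed

end

theorem theorem2p5:
  fixes q x :: "'a::field_char_0" and n s :: nat
  assumes "s \<le> n" and "q \<noteq> 0" and "x \<noteq> 0"
    and "\<And>j::nat. j \<ge> 1 \<Longrightarrow> q ^ j \<noteq> 1"
  shows "(\<Sum>k=s..n. qpoch (inverse (q ^ (2*n))) (q^2) k * qpoch x q k * q ^ k
                      / (qpoch q q (k - s) * qpoch q q (k + s)))
       * (\<Sum>k=s..n. qpoch (inverse (q ^ (2*n))) (q^2) k * qpoch (q / x) q k * q ^ k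
                      / (qpoch q q (k - s) * qpoch q q (k + s)))
       = (-1) ^ n * (qpoch (q^2) (q^2) n)^2 * inverse (q ^ (n^2))
           / (qpoch (q^2) (q^2) (n - s) * qpoch (q^2) (q^2) (n + s))
         * (\<Sum>k=s..n. (-1) ^ k * qpoch (q^2) (q^2) (n + k) * qpoch x q k * qpoch (q / x) q k
                        * q powi (int (k^2) - 2 * int n * int k)
                      / (qpoch (q^2) (q^2) (n - k) * qpoch q q (k - s) * qpoch q q (k + s)
                         * qpoch q q (2*k)))"
proof -
  interpret theorem_setting q n s
    using assms by unfold_locales auto
  show ?thesis
    unfolding lhs_sum_as_phi sum_from_s sum_distrib_left product_formula_specialized[OF assms(3)]
    by (rule sum.cong[OF refl], rule term_identity[OF assms(3)]) simp
qed

end
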